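(* Let $G=(V,D,B)$ be a mixed graph with $V=\{1,\dots,n\}$, and let $\Lambda=(\lambda_{uv})$ and $\Omega$ be the matrices of indeterminates associated with the directed and bidirected parts of $G$. Let $D_L,D_R\subset D$ and define $n\times n$ matrices $\Lambda^L,\Lambda^R$ by $\Lambda^L_{uv}=\lambda_{uv}$ if $(u,v)\in D_L$ and $0$ otherwise, and $\Lambda^R_{uv}=\lambda_{uv}$ if $(u,v)\in D_R$ and $0$ otherwise. Let $G^*_{\mathrm{flow}}=(V^*,D^* )$ be the directed graph with $V^*=\{1,\dots,n\}\cup\{1',\dots,n'\}$ and $D^*$ consisting of: $i\to j$ if $(j,i)\in D_L$; $i\to i'$ for all $i\in V$; $i\to j'$ if $(i,j)\in B$; $i'\to j'$ if $(i,j)\in D_R$; all edges and vertices have capacity $1$. Let $\Gamma=(I-\Lambda^L)^{-T}\Omega(I-\Lambda^R)^{-1}$. Then for any $S,T\subset V$ with $|S|=|T|=k$, if the maximum flow from $S$ to $T'=\{t':t\in T\}$ in $G^*_{\mathrm{flow}}$ is less than $k$, then $|\Gamma_{S,T}|=0$.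
   Context: A mixed graph $G=(V,D,B)$ has directed edges $D\subset V\times V$ and symmetric bidirected edges $B\subset V\times V$, without self-loops. The matrix of indeterminates $\Lambda$ has an indeterminate $\lambda_{uv}$ in position $(u,v)$ if $(u,v)\in D$ and $0$ otherwise; $\Omega$ is symmetric with indeterminate diagonal entries, an indeterminate $\omega_{uv}=\omega_{vu}$ if $(u,v)\in B$, and $0$ otherwise. Entries of $\Gamma$ are formal power series (rational functions) in these indeterminates, and $|\Gamma_{S,T}|=0$ means that the determinant of the submatrix with rows $S$ and columns $T$ is identically zero. Maximum flow allows multiple sources/sinks and vertex capacities. *)

theory Defs
  imports "Jordan_Normal_Form.DL_Submatrix" "Jordan_Normal_Form.Determinant"
begin

(* Vertices of the flow graph G*_flow: L i stands for i, P i stands for i'. *)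
datatype fvert = L nat | P nat

(* Edge set D* of G*_flow (vertex set V = {0..<n}). *)
definition flow_edges :: "nat \<Rightarrow> (nat \<times> nat) set \<Rightarrow> (nat \<times> nat) set \<Rightarrow> (nat \<times> nat) set
                          \<Rightarrow> (fvert \<times> fvert) set" where
  "flow_edges n B DL DR =
     {(L i, L j) | i j. (j, i) \<in> DL}
   \<union> {(L i, P i) | i. i < n}
   \<union> {(L i, P j) | i j. (i, j) \<in> B}
   \<union> {(P i, P j) | i j. (i, j) \<in> DR}"

definition flow_verts :: "nat \<Rightarrow> fvert set" where
  "flow_verts n = {L i | i. i < n} \<union> {P i | i. i < n}"

(* A flow in the digraph (Vs,E) from the source set Src to the sink set Snk, with all
   edge and vertex capacities equal to 1 (multiple sources/sinks handled via a
   super-source supply sig and a super-sink demand tau). *)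
definition is_flow :: "fvert set \<Rightarrow> (fvert \<times> fvert) set \<Rightarrow> fvert set \<Rightarrow> fvert set
     \<Rightarrow> (fvert \<times> fvert \<Rightarrow> real) \<Rightarrow> (fvert \<Rightarrow> real) \<Rightarrow> (fvert \<Rightarrow> real) \<Rightarrow> bool" where
  "is_flow Vs E Src Snk f sig tau \<longleftrightarrow>
     (\<forall>e\<in>E. 0 \<le> f e \<and> f e \<le> 1) \<and>
     (\<forall>v\<in>Vs. 0 \<le> sig v \<and> 0 \<le> tau v) \<and>
     (\<forall>v\<in>Vs. v \<notin> Src \<longrightarrow> sig v = 0) \<and>
     (\<forall>v\<in>Vs. v \<notin> Snk \<longrightarrow> tau v = 0) \<and>
     (\<forall>v\<in>Vs. sig v + (\<Sum>e\<in>{e\<in>E. snd e = v}. f e)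
              = (\<Sum>e\<in>{e\<in>E. fst e = v}. f e) + tau v) \<and>
     (\<forall>v\<in>Vs. sig v + (\<Sum>e\<in>{e\<in>E. snd e = v}. f e) \<le> 1)"

definition flow_value :: "fvert set \<Rightarrow> (fvert \<Rightarrow> real) \<Rightarrow> real" where
  "flow_value Src sig = (\<Sum>v\<in>Src. sig v)"

definition max_flow :: "fvert set \<Rightarrow> (fvert \<times> fvert) set \<Rightarrow> fvert set \<Rightarrow> fvert set \<Rightarrow> real" where
  "max_flow Vs E Src Snk =
     Sup {flow_value Src sig | f sig tau. is_flow Vs E Src Snk f sig tau}"

(* Evaluation of the indeterminate matrices at a point: lam u v is the value of lambda_uv,
   om u v the value of omega_uv. *)
definition Lam_mat :: "nat \<Rightarrow> (nat \<times> nat) set \<Rightarrow> (nat \<Rightarrow> nat \<Rightarrow> real) \<Rightarrow> real mat" where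
  "Lam_mat n E lam = mat n n (\<lambda>(u, v). if (u, v) \<in> E then lam u v else 0)"

definition Om_mat :: "nat \<Rightarrow> (nat \<times> nat) set \<Rightarrow> (nat \<Rightarrow> nat \<Rightarrow> real) \<Rightarrow> real mat" where
  "Om_mat n B om = mat n n (\<lambda>(u, v). if u = v then om u u else if (u, v) \<in> B then om u v else 0)"

end

theory Submission
  imports Defs
begin

(* \<Gamma> is the upper right block of the inverse X of the 2n \<times> 2n matrix
   N = [(I - \<Lambda>\<^sup>L)\<^sup>T, -\<Omega>; 0, I - \<Lambda>\<^sup>R], whose rows and columns we index by the vertices
   1..n, 1'..n' of G*_flow.  If |\<Gamma>_{S,T}| \<noteq> 0, then by Jacobi's complementary minor theorem
   the minor of N with rows avoiding T' and columns avoiding S is nonzero, so some term of its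
   Leibniz expansion is nonzero: a bijection \<sigma> from V* - T' onto V* - S along nonzero entries
   of N.  Off the diagonal, the nonzero entries of N lie on edges of G*_flow, so the edges
   (v, \<sigma> v) with \<sigma> v \<noteq> v form vertex-disjoint paths from S to T' (and cycles): a flow of
   value k.  Only the one-sided inverse identities are used. *)

definition pick_inv :: "nat set \<Rightarrow> nat \<Rightarrow> nat" where
  "pick_inv I i = card {a\<in>I. a < i}"

lemma pick_inv_pick [simp]: "a < card I \<Longrightarrow> pick_inv I (pick I a) = a"
  unfolding pick_inv_def by (rule card_pick_le)

lemma pick_pick_inv [simp]: "i \<in> I \<Longrightarrow> pick I (pick_inv I i) = i"
  unfolding pick_inv_def by (rule pick_card_in_set)

lemma pick_inv_less_card: "finite I \<Longrightarrow> i \<in> I \<Longrightarrow> pick_inv I i < card I"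
  unfolding pick_inv_def by (rule psubset_card_mono) auto

lemma bij_betw_pick: "finite I \<Longrightarrow> bij_betw (pick I) {0..<card I} I"
  by (rule bij_betw_byWitness[where f' = "pick_inv I"])
    (auto simp: pick_in_set_le pick_inv_less_card)

lemma bij_betw_pick_inv: "finite I \<Longrightarrow> bij_betw (pick_inv I) I {0..<card I}"
  by (rule bij_betw_byWitness[where f' = "pick I"])
    (auto simp: pick_in_set_le pick_inv_less_card)

lemma sum_pick_reindex: "finite I \<Longrightarrow> (\<Sum>a = 0..<card I. g (pick I a)) = (\<Sum>i\<in>I. g i)"
  using sum.reindex_bij_betw[OF bij_betw_pick] by blast

lemma submatrix_carrier_mat:
  assumes "A \<in> carrier_mat m m'" "I \<subseteq> {0..<m}" "J \<subseteq> {0..<m'}"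
  shows "submatrix A I J \<in> carrier_mat (card I) (card J)"
proof -
  have rows: "{i. i < dim_row A \<and> i \<in> I} = I" and cols: "{j. j < dim_col A \<and> j \<in> J} = J"
    using assms by auto
  show ?thesis by (rule carrier_matI) (simp_all only: dim_submatrix rows cols)
qed

lemma submatrix_index_pick:
  assumes "A \<in> carrier_mat m m'" "I \<subseteq> {0..<m}" "J \<subseteq> {0..<m'}" "a < card I" "b < card J"
  shows "submatrix A I J $$ (a, b) = A $$ (pick I a, pick J b)"
proof -
  have rows: "{i. i < dim_row A \<and> i \<in> I} = I" and cols: "{j. j < dim_col A \<and> j \<in> J} = J"
    using assms(1-3) by auto
  show ?thesis by (rule submatrix_index) (unfold rows cols, fact assms(4), fact assms(5))
qed

lemma ball_pick_iff:
  assumes "finite I" shows "(\<forall>a < card I. Q (pick I a)) \<longleftrightarrow> (\<forall>i\<in>I. Q i)"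
proof
  assume Q: "\<forall>a < card I. Q (pick I a)"
  show "\<forall>i\<in>I. Q i"
  proof
    fix i assume "i \<in> I"
    then have "pick_inv I i < card I" "pick I (pick_inv I i) = i"
      using pick_inv_less_card[OF assms] by auto
    then show "Q i" using Q by metis
  qed
qed (use pick_in_set_le in blast)

lemma vec_pick_eq_0_iff:
  assumes "finite I"
  shows "vec (card I) (\<lambda>a. y (pick I a)) = 0\<^sub>v (card I) \<longleftrightarrow> (\<forall>i\<in>I. y i = 0)"
proof -
  have "vec (card I) (\<lambda>a. y (pick I a)) = 0\<^sub>v (card I) \<longleftrightarrow> (\<forall>a < card I. y (pick I a) = 0)"
    by (auto simp: vec_eq_iff)
  also have "\<dots> \<longleftrightarrow> (\<forall>i\<in>I. y i = 0)" by (rule ball_pick_iff[OF assms])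
  finally show ?thesis .
qed

lemma transpose_submatrix_mult_vec_pick_eq_0_iff:
  fixes A :: "'a :: comm_ring_1 mat"
  assumes A: "A \<in> carrier_mat m m'" and I: "I \<subseteq> {0..<m}" and J: "J \<subseteq> {0..<m'}"
    and card: "card I = card J"
  shows "transpose_mat (submatrix A I J) *\<^sub>v vec (card I) (\<lambda>a. y (pick I a)) = 0\<^sub>v (card I)
    \<longleftrightarrow> (\<forall>j\<in>J. (\<Sum>i\<in>I. y i * A $$ (i, j)) = 0)"
proof -
  let ?B = "submatrix A I J" and ?v = "vec (card I) (\<lambda>a. y (pick I a))"
  have fin: "finite I" "finite J" using I J finite_subset by auto
  have B: "?B \<in> carrier_mat (card I) (card I)" using submatrix_carrier_mat[OF A I J] card by simp
  have entry: "(transpose_mat ?B *\<^sub>v ?v) $ b = (\<Sum>i\<in>I. y i * A $$ (i, pick J b))"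
    if b: "b < card I" for b
  proof -
    have "(transpose_mat ?B *\<^sub>v ?v) $ b = (\<Sum>a = 0..<card I. ?B $$ (a, b) * y (pick I a))"
      using B b by (simp add: scalar_prod_def)
    also have "\<dots> = (\<Sum>a = 0..<card I. y (pick I a) * A $$ (pick I a, pick J b))"
      using submatrix_index_pick[OF A I J] b card by (simp add: mult.commute)
    also have "\<dots> = (\<Sum>i\<in>I. y i * A $$ (i, pick J b))" by (rule sum_pick_reindex[OF fin(1)])
    finally show ?thesis .
  qed
  have "transpose_mat ?B *\<^sub>v ?v = 0\<^sub>v (card I) \<longleftrightarrow>
      (\<forall>b < card J. (\<Sum>i\<in>I. y i * A $$ (i, pick J b)) = 0)"
    using B entry card by (auto simp: vec_eq_iff)
  also have "\<dots> \<longleftrightarrow> (\<forall>j\<in>J. (\<Sum>i\<in>I. y i * A $$ (i, j)) = 0)"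
    by (rule ball_pick_iff[OF fin(2), of "\<lambda>j. (\<Sum>i\<in>I. y i * A $$ (i, j)) = 0"])
  finally show ?thesis .
qed

lemma det_submatrix_eq_0_iff:
  fixes A :: "'a :: idom mat"
  assumes A: "A \<in> carrier_mat m m'" and I: "I \<subseteq> {0..<m}" and J: "J \<subseteq> {0..<m'}"
    and card: "card I = card J"
  shows "det (submatrix A I J) = 0 \<longleftrightarrow>
    (\<exists>y. (\<exists>i\<in>I. y i \<noteq> 0) \<and> (\<forall>j\<in>J. (\<Sum>i\<in>I. y i * A $$ (i, j)) = 0))"
proof -
  let ?B = "submatrix A I J" and ?k = "card I"
  let ?v = "\<lambda>y. vec ?k (\<lambda>a. y (pick I a))"
  have B: "?B \<in> carrier_mat ?k ?k" using submatrix_carrier_mat[OF A I J] card by simp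
  have "finite I" using I finite_subset by blast
  then have nonzero: "?v y \<noteq> 0\<^sub>v ?k \<longleftrightarrow> (\<exists>i\<in>I. y i \<noteq> 0)" for y
    using vec_pick_eq_0_iff[of I y] by blast
  have kernel: "transpose_mat ?B *\<^sub>v ?v y = 0\<^sub>v ?k \<longleftrightarrow> (\<forall>j\<in>J. (\<Sum>i\<in>I. y i * A $$ (i, j)) = 0)"
    for y by (rule transpose_submatrix_mult_vec_pick_eq_0_iff[OF A I J card])
  have "det ?B = 0 \<longleftrightarrow> det (transpose_mat ?B) = 0" using det_transpose[OF B] by simp
  also have "\<dots> \<longleftrightarrow> (\<exists>v. v \<in> carrier_vec ?k \<and> v \<noteq> 0\<^sub>v ?k \<and> transpose_mat ?B *\<^sub>v v = 0\<^sub>v ?k)"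
    using B by (intro det_0_iff_vec_prod_zero) simp
  also have "\<dots> \<longleftrightarrow> (\<exists>y. ?v y \<noteq> 0\<^sub>v ?k \<and> transpose_mat ?B *\<^sub>v ?v y = 0\<^sub>v ?k)"
  proof
    assume "\<exists>v. v \<in> carrier_vec ?k \<and> v \<noteq> 0\<^sub>v ?k \<and> transpose_mat ?B *\<^sub>v v = 0\<^sub>v ?k"
    then obtain v where v: "v \<in> carrier_vec ?k" "v \<noteq> 0\<^sub>v ?k" "transpose_mat ?B *\<^sub>v v = 0\<^sub>v ?k"
      by blast
    have "?v (\<lambda>i. v $ pick_inv I i) = v" using v(1) by (intro eq_vecI) auto
    then show "\<exists>y. ?v y \<noteq> 0\<^sub>v ?k \<and> transpose_mat ?B *\<^sub>v ?v y = 0\<^sub>v ?k"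
      using v(2,3) by (intro exI[of _ "\<lambda>i. v $ pick_inv I i"]) simp
  qed (use vec_carrier in blast)
  also have "\<dots> \<longleftrightarrow> (\<exists>y. (\<exists>i\<in>I. y i \<noteq> 0) \<and> (\<forall>j\<in>J. (\<Sum>i\<in>I. y i * A $$ (i, j)) = 0))"
    unfolding nonzero kernel ..
  finally show ?thesis .
qed

lemma det_submatrix_nonzero_imp_transversal:
  fixes A :: "'a :: comm_ring_1 mat"
  assumes A: "A \<in> carrier_mat m m'" and I: "I \<subseteq> {0..<m}" and J: "J \<subseteq> {0..<m'}"
    and card: "card I = card J" and det: "det (submatrix A I J) \<noteq> 0"
  obtains \<sigma> where "bij_betw \<sigma> I J" and "\<And>i. i \<in> I \<Longrightarrow> A $$ (i, \<sigma> i) \<noteq> 0"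
proof -
  let ?B = "submatrix A I J" and ?k = "card I"
  have fin: "finite I" "finite J" using I J finite_subset by auto
  have B: "?B \<in> carrier_mat ?k ?k" using submatrix_carrier_mat[OF A I J] card by simp
  have "(\<Sum>p | p permutes {0..<?k}. signof p * (\<Prod>a = 0..<?k. ?B $$ (a, p a))) \<noteq> 0"
    using det det_def'[OF B] by simp
  then obtain p where p: "p permutes {0..<?k}" and "signof p * (\<Prod>a = 0..<?k. ?B $$ (a, p a)) \<noteq> 0"
    using sum.not_neutral_contains_not_neutral by blast
  then have "(\<Prod>a = 0..<?k. ?B $$ (a, p a)) \<noteq> 0" by (metis mult_zero_right)
  then have entries: "?B $$ (a, p a) \<noteq> 0" if "a < ?k" for a
    using that prod_zero[of "{0..<?k}" "\<lambda>a. ?B $$ (a, p a)"] by force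
  show ?thesis
  proof
    have "bij_betw (pick_inv I) I {0..<?k}" by (rule bij_betw_pick_inv[OF fin(1)])
    moreover have "bij_betw p {0..<?k} {0..<?k}" using p by (rule permutes_imp_bij)
    moreover have "bij_betw (pick J) {0..<?k} J" using bij_betw_pick[OF fin(2)] card by simp
    ultimately show "bij_betw (pick J \<circ> p \<circ> pick_inv I) I J" by (blast intro: bij_betw_trans)
  next
    fix i assume i: "i \<in> I"
    then have a: "pick_inv I i < ?k" by (rule pick_inv_less_card[OF fin(1)])
    then have "p (pick_inv I i) < ?k" using p by (simp add: permutes_in_image)
    then show "A $$ (i, (pick J \<circ> p \<circ> pick_inv I) i) \<noteq> 0"
      using entries[OF a] submatrix_index_pick[OF A I J a] card i by simp
  qed
qed

(* If y is a left null vector of the complementary minor of N, then z = y N vanishes outside S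
   and z X = y, so z restricted to S is a nonzero left null vector of X_{S,T}. *)
lemma det_submatrix_complement_nonzero:
  fixes N X :: "'a :: idom mat"
  assumes N: "N \<in> carrier_mat m m" and X: "X \<in> carrier_mat m m" and inv: "N * X = 1\<^sub>m m"
    and S: "S \<subseteq> {0..<m}" and T: "T \<subseteq> {0..<m}" and card: "card S = card T"
    and det: "det (submatrix X S T) \<noteq> 0"
  shows "det (submatrix N ({0..<m} - T) ({0..<m} - S)) \<noteq> 0"
proof
  let ?R = "{0..<m} - T" and ?C = "{0..<m} - S"
  have card_RC: "card ?R = card ?C" using S T card by (simp add: card_Diff_subset finite_subset)
  assume "det (submatrix N ?R ?C) = 0"
  then obtain y where y: "\<exists>r\<in>?R. y r \<noteq> 0" and yC: "\<forall>c\<in>?C. (\<Sum>r\<in>?R. y r * N $$ (r, c)) = 0"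
    unfolding det_submatrix_eq_0_iff[OF N Diff_subset Diff_subset card_RC] by blast
  define z where "z s = (\<Sum>r\<in>?R. y r * N $$ (r, s))" for s
  have zX: "(\<Sum>s = 0..<m. z s * X $$ (s, t)) = (if t \<in> ?R then y t else 0)" if t: "t < m" for t
  proof -
    have "(\<Sum>s = 0..<m. z s * X $$ (s, t)) = (\<Sum>r\<in>?R. \<Sum>s = 0..<m. y r * (N $$ (r, s) * X $$ (s, t)))"
      unfolding z_def sum_distrib_right by (subst sum.swap) (simp add: mult.assoc)
    also have "\<dots> = (\<Sum>r\<in>?R. y r * (N * X) $$ (r, t))"
      using N X t by (intro sum.cong) (auto simp: scalar_prod_def sum_distrib_left)
    also have "\<dots> = (\<Sum>r\<in>?R. if r = t then y r else 0)"
      using inv t by (intro sum.cong) auto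
    finally show ?thesis by simp
  qed
  have z_C: "z c = 0" if "c \<in> ?C" for c using yC that unfolding z_def by blast
  have z_S: "z s = 0" if s: "s \<in> S" for s
  proof -
    have "(\<Sum>s\<in>S. z s * X $$ (s, t)) = 0" if t: "t \<in> T" for t
    proof -
      have "(\<Sum>s\<in>S. z s * X $$ (s, t)) = (\<Sum>s = 0..<m. z s * X $$ (s, t))"
        using S z_C by (intro sum.mono_neutral_left) auto
      also have "\<dots> = 0" using zX t T by auto
      finally show ?thesis .
    qed
    then show ?thesis using det_submatrix_eq_0_iff[OF X S T card] det s by blast
  qed
  have z: "z s = 0" if "s < m" for s using z_S z_C that by (cases "s \<in> S") auto
  have "y r = 0" if r: "r \<in> ?R" for r
  proof -
    have "y r = (\<Sum>s = 0..<m. z s * X $$ (s, r))" using zX r by simp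
    also have "\<dots> = 0" using z by simp
    finally show ?thesis .
  qed
  then show False using y by blast
qed

lemma det_submatrix_four_block_mat_upper_right:
  fixes A B C D :: "'a :: idom mat"
  assumes A: "A \<in> carrier_mat m n" and B: "B \<in> carrier_mat m n'"
    and C: "C \<in> carrier_mat m' n" and D: "D \<in> carrier_mat m' n'"
    and I: "I \<subseteq> {0..<m}" and J: "J \<subseteq> {0..<n'}" and card: "card I = card J"
  shows "det (submatrix (four_block_mat A B C D) I ((+) n ` J)) = 0 \<longleftrightarrow> det (submatrix B I J) = 0"
proof -
  have entry: "four_block_mat A B C D $$ (i, n + j) = B $$ (i, j)" if "i \<in> I" "j \<in> J" for i j
  proof -
    have "i < m" "j < n'" using that I J by auto
    then show ?thesis using A D by simp
  qed
  have "card I = card ((+) n ` J)" using card by (simp add: card_image)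
  moreover have "(+) n ` J \<subseteq> {0..<n + n'}" using J by auto
  ultimately have "det (submatrix (four_block_mat A B C D) I ((+) n ` J)) = 0 \<longleftrightarrow>
      (\<exists>y. (\<exists>i\<in>I. y i \<noteq> 0) \<and> (\<forall>j\<in>J. (\<Sum>i\<in>I. y i * four_block_mat A B C D $$ (i, n + j)) = 0))"
    using I by (subst det_submatrix_eq_0_iff[OF four_block_carrier_mat[OF A D]]) auto
  also have "\<dots> \<longleftrightarrow> (\<exists>y. (\<exists>i\<in>I. y i \<noteq> 0) \<and> (\<forall>j\<in>J. (\<Sum>i\<in>I. y i * B $$ (i, j)) = 0))"
    using entry
    by (intro ex_cong1 conj_cong ball_cong refl arg_cong[where f = "\<lambda>x. x = 0"] sum.cong) auto
  also have "\<dots> \<longleftrightarrow> det (submatrix B I J) = 0"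
    by (rule det_submatrix_eq_0_iff[OF B I J card, symmetric])
  finally show ?thesis .
qed

lemma four_block_mat_upper_triangular_inverse:
  fixes A D M R W :: "'a :: comm_ring_1 mat"
  assumes A: "A \<in> carrier_mat n n" and D: "D \<in> carrier_mat n n" and W: "W \<in> carrier_mat n n"
    and M: "M \<in> carrier_mat n n" and R: "R \<in> carrier_mat n n"
    and AM: "A * M = 1\<^sub>m n" and DR: "D * R = 1\<^sub>m n"
  shows "four_block_mat A (- W) (0\<^sub>m n n) D * four_block_mat M (M * W * R) (0\<^sub>m n n) R
    = 1\<^sub>m (n + n)"
proof -
  have MWR: "M * W * R \<in> carrier_mat n n" using M W R by simp
  have "A * (M * W * R) = A * (M * (W * R))" using M W R by (simp add: assoc_mult_mat)
  also have "\<dots> = (A * M) * (W * R)" using assoc_mult_mat[OF A M mult_carrier_mat[OF W R]] by simp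
  also have "\<dots> = W * R" using AM W R by simp
  finally have "A * (M * W * R) = W * R" .
  then have "four_block_mat A (- W) (0\<^sub>m n n) D * four_block_mat M (M * W * R) (0\<^sub>m n n) R
      = four_block_mat (1\<^sub>m n) (0\<^sub>m n n) (0\<^sub>m n n) (1\<^sub>m n)"
    using A D W M R MWR AM DR
    by (subst mult_four_block_mat[OF A uminus_carrier_mat[OF W] zero_carrier_mat D
          M MWR zero_carrier_mat R])
      (auto intro!: cong_four_block_mat eq_matI)
  then show ?thesis by simp
qed

lemma flow_value_le_max_flow:
  assumes Src: "Src \<subseteq> Vs" and flow: "is_flow Vs E Src Snk f sig tau"
  shows "flow_value Src sig \<le> max_flow Vs E Src Snk"
  unfolding max_flow_def
proof (rule cSup_upper)
  show "flow_value Src sig \<in> {flow_value Src sig | f sig tau. is_flow Vs E Src Snk f sig tau}"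
    using flow by blast
  have "flow_value Src sig' \<le> card Src" if "is_flow Vs E Src Snk f' sig' tau'" for f' sig' tau'
  proof -
    have "sig' v \<le> 1" if v: "v \<in> Src" for v
    proof -
      have "0 \<le> (\<Sum>e\<in>{e\<in>E. snd e = v}. f' e)"
        using \<open>is_flow Vs E Src Snk f' sig' tau'\<close> by (auto simp: is_flow_def intro: sum_nonneg)
      moreover have "sig' v + (\<Sum>e\<in>{e\<in>E. snd e = v}. f' e) \<le> 1"
        using \<open>is_flow Vs E Src Snk f' sig' tau'\<close> v Src by (auto simp: is_flow_def)
      ultimately show ?thesis by linarith
    qed
    then show ?thesis unfolding flow_value_def using sum_bounded_above[of Src sig' 1] by simp
  qed
  then show "bdd_above {flow_value Src sig | f sig tau. is_flow Vs E Src Snk f sig tau}"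
    by (intro bdd_aboveI[where M = "real (card Src)"]) blast
qed

(* One unit of flow along each edge (u, \<sigma> u) with \<sigma> u \<noteq> u: these edges form vertex-disjoint
   paths from Src to Snk, and cycles. *)
lemma flow_of_bij_betw:
  assumes E: "finite E" and Src: "Src \<subseteq> Vs" and Snk: "Snk \<subseteq> Vs" and disj: "Src \<inter> Snk = {}"
    and bij: "bij_betw \<sigma> (Vs - Snk) (Vs - Src)"
    and edge: "\<And>u. u \<in> Vs - Snk \<Longrightarrow> \<sigma> u \<noteq> u \<Longrightarrow> (u, \<sigma> u) \<in> E"
  obtains f sig tau where "is_flow Vs E Src Snk f sig tau" and "flow_value Src sig = card Src"
proof -
  define F where "F = {(u, \<sigma> u) | u. u \<in> Vs - Snk \<and> \<sigma> u \<noteq> u}"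
  define \<rho> where "\<rho> = inv_into (Vs - Snk) \<sigma>"
  define f :: "fvert \<times> fvert \<Rightarrow> real" where "f e = of_bool (e \<in> F)" for e
  define sig :: "fvert \<Rightarrow> real" where "sig v = of_bool (v \<in> Src)" for v
  define tau :: "fvert \<Rightarrow> real" where "tau v = of_bool (v \<in> Snk)" for v
  have \<sigma>: "\<sigma> u \<in> Vs - Src" if "u \<in> Vs - Snk" for u using bij_betwE[OF bij] that by blast
  have \<rho>: "\<rho> v \<in> Vs - Snk" "\<sigma> (\<rho> v) = v" if "v \<in> Vs - Src" for v
    using bij_betwE[OF bij_betw_inv_into[OF bij]] bij_betw_inv_into_right[OF bij] that
    unfolding \<rho>_def by blast+
  have \<rho>_\<sigma>: "\<rho> (\<sigma> u) = u" if "u \<in> Vs - Snk" for u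
    using bij that unfolding \<rho>_def by (rule bij_betw_inv_into_left)
  have sum_f: "(\<Sum>e\<in>{e\<in>E. Q e}. f e) = card {e\<in>F. Q e}" for Q
  proof -
    have "{e\<in>E. Q e} \<inter> {e. e \<in> F} = {e\<in>F. Q e}" using edge unfolding F_def by auto
    then show ?thesis using E unfolding f_def by simp
  qed
  have out_sum: "(\<Sum>e\<in>{e\<in>E. fst e = v}. f e) = of_bool (v \<in> Vs - Snk \<and> \<sigma> v \<noteq> v)" for v
  proof -
    have "{e\<in>F. fst e = v} = (if v \<in> Vs - Snk \<and> \<sigma> v \<noteq> v then {(v, \<sigma> v)} else {})"
      unfolding F_def by auto
    then show ?thesis unfolding sum_f by simp
  qed
  have in_sum: "(\<Sum>e\<in>{e\<in>E. snd e = v}. f e) = of_bool (v \<in> Vs - Src \<and> \<rho> v \<noteq> v)" for v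
  proof -
    have "{e\<in>F. snd e = v} = (if v \<in> Vs - Src \<and> \<rho> v \<noteq> v then {(\<rho> v, v)} else {})"
      unfolding F_def using \<sigma> \<rho> \<rho>_\<sigma> by (auto; metis)
    then show ?thesis unfolding sum_f by simp
  qed
  have balance: "of_bool (v \<in> Src) + of_bool (v \<in> Vs - Src \<and> \<rho> v \<noteq> v)
      = of_bool (v \<in> Vs - Snk \<and> \<sigma> v \<noteq> v) + (of_bool (v \<in> Snk) :: real)"
    and capacity: "of_bool (v \<in> Src) + of_bool (v \<in> Vs - Src \<and> \<rho> v \<noteq> v) \<le> (1 :: real)"
    if v: "v \<in> Vs" for v
  proof -
    consider (source) "v \<in> Src" | (sink) "v \<in> Snk" | (inner) "v \<in> Vs - Src - Snk" using v by blast
    then have "(v \<in> Src \<or> \<rho> v \<noteq> v) \<longleftrightarrow> (v \<in> Snk \<or> \<sigma> v \<noteq> v)"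
    proof cases
      case source
      then show ?thesis using \<sigma>[of v] v disj by auto
    next
      case sink
      then show ?thesis using \<rho>[of v] v disj by auto
    next
      case inner
      then show ?thesis using \<rho>(2) \<rho>_\<sigma> by (metis Diff_iff)
    qed
    then show "of_bool (v \<in> Src) + of_bool (v \<in> Vs - Src \<and> \<rho> v \<noteq> v)
      = of_bool (v \<in> Vs - Snk \<and> \<sigma> v \<noteq> v) + (of_bool (v \<in> Snk) :: real)"
      using v disj by auto
    show "of_bool (v \<in> Src) + of_bool (v \<in> Vs - Src \<and> \<rho> v \<noteq> v) \<le> (1 :: real)" by auto
  qed
  have "is_flow Vs E Src Snk f sig tau"
    unfolding is_flow_def in_sum out_sum sig_def tau_def
  proof (intro conjI)
    show "\<forall>v\<in>Vs. of_bool (v \<in> Src) + of_bool (v \<in> Vs - Src \<and> \<rho> v \<noteq> v)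
        = of_bool (v \<in> Vs - Snk \<and> \<sigma> v \<noteq> v) + (of_bool (v \<in> Snk) :: real)"
      using balance by blast
    show "\<forall>v\<in>Vs. of_bool (v \<in> Src) + of_bool (v \<in> Vs - Src \<and> \<rho> v \<noteq> v) \<le> (1 :: real)"
      using capacity by blast
  qed (auto simp: f_def)
  moreover have "flow_value Src sig = card Src" unfolding flow_value_def sig_def by simp
  ultimately show ?thesis by (rule that)
qed

definition flow_vert :: "nat \<Rightarrow> nat \<Rightarrow> fvert" where
  "flow_vert n a = (if a < n then L a else P (a - n))"

lemma flow_vert_less [simp]: "a < n \<Longrightarrow> flow_vert n a = L a"
  by (simp add: flow_vert_def)

lemma flow_vert_add [simp]: "flow_vert n (n + i) = P i"
  by (simp add: flow_vert_def)

lemma bij_betw_flow_vert: "bij_betw (flow_vert n) {0..<n + n} (flow_verts n)"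
  by (rule bij_betw_byWitness[where f' = "case_fvert (\<lambda>i. i) (\<lambda>i. n + i)"])
    (auto simp: flow_vert_def flow_verts_def split: fvert.splits)

lemma flow_edges_subset:
  assumes "B \<subseteq> {0..<n} \<times> {0..<n}" "DL \<subseteq> {0..<n} \<times> {0..<n}" "DR \<subseteq> {0..<n} \<times> {0..<n}"
  shows "flow_edges n B DL DR \<subseteq> flow_verts n \<times> flow_verts n"
proof -
  have "flow_verts n = L ` {0..<n} \<union> P ` {0..<n}" by (auto simp: flow_verts_def)
  then show ?thesis using assms unfolding flow_edges_def by auto
qed

definition flow_mat :: "nat \<Rightarrow> (nat \<times> nat) set \<Rightarrow> (nat \<times> nat) set \<Rightarrow> (nat \<times> nat) set
    \<Rightarrow> (nat \<Rightarrow> nat \<Rightarrow> real) \<Rightarrow> (nat \<Rightarrow> nat \<Rightarrow> real) \<Rightarrow> real mat" where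
  "flow_mat n B DL DR lam om = four_block_mat (transpose_mat (1\<^sub>m n - Lam_mat n DL lam))
     (- Om_mat n B om) (0\<^sub>m n n) (1\<^sub>m n - Lam_mat n DR lam)"

lemma Lam_mat_carrier [simp]: "Lam_mat n E lam \<in> carrier_mat n n"
  by (simp add: Lam_mat_def)

lemma Om_mat_carrier [simp]: "Om_mat n B om \<in> carrier_mat n n"
  by (simp add: Om_mat_def)

lemma flow_mat_carrier: "flow_mat n B DL DR lam om \<in> carrier_mat (n + n) (n + n)"
  by (simp add: flow_mat_def minus_carrier_mat)

lemma flow_mat_inverse:
  assumes M\<^sub>L: "M\<^sub>L \<in> carrier_mat n n" and M\<^sub>R: "M\<^sub>R \<in> carrier_mat n n"
    and left: "M\<^sub>L * (1\<^sub>m n - Lam_mat n DL lam) = 1\<^sub>m n"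
    and right: "(1\<^sub>m n - Lam_mat n DR lam) * M\<^sub>R = 1\<^sub>m n"
  shows "flow_mat n B DL DR lam om * four_block_mat (transpose_mat M\<^sub>L)
      (transpose_mat M\<^sub>L * Om_mat n B om * M\<^sub>R) (0\<^sub>m n n) M\<^sub>R = 1\<^sub>m (n + n)"
  unfolding flow_mat_def
proof (rule four_block_mat_upper_triangular_inverse)
  have "transpose_mat (1\<^sub>m n - Lam_mat n DL lam) * transpose_mat M\<^sub>L
      = transpose_mat (M\<^sub>L * (1\<^sub>m n - Lam_mat n DL lam))"
    using transpose_mult[OF M\<^sub>L minus_carrier_mat[OF Lam_mat_carrier]] by simp
  then show "transpose_mat (1\<^sub>m n - Lam_mat n DL lam) * transpose_mat M\<^sub>L = 1\<^sub>m n"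
    using left by simp
qed (use M\<^sub>L M\<^sub>R right in \<open>simp_all add: minus_carrier_mat\<close>)

lemma flow_edge_if_flow_mat_nonzero:
  assumes a: "a < n + n" and b: "b < n + n" and "a \<noteq> b"
    and nonzero: "flow_mat n B DL DR lam om $$ (a, b) \<noteq> 0"
  shows "(flow_vert n a, flow_vert n b) \<in> flow_edges n B DL DR"
proof -
  consider "a < n" "b < n" | "a < n" "n \<le> b" | "n \<le> a" "b < n" | "n \<le> a" "n \<le> b" by linarith
  then show ?thesis
  proof cases
    case 1
    then have "(b, a) \<in> DL"
      using nonzero \<open>a \<noteq> b\<close> by (auto simp: flow_mat_def Lam_mat_def split: if_splits)
    then show ?thesis using 1 by (auto simp: flow_vert_def flow_edges_def)
  next
    case 2
    then have "a = b - n \<or> (a, b - n) \<in> B"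
      using nonzero b by (auto simp: flow_mat_def Lam_mat_def Om_mat_def split: if_splits)
    then show ?thesis using 2 by (auto simp: flow_vert_def flow_edges_def)
  next
    case 3
    then show ?thesis using nonzero a by (simp add: flow_mat_def Lam_mat_def)
  next
    case 4
    then have "(a - n, b - n) \<in> DR"
      using nonzero a b \<open>a \<noteq> b\<close> by (auto simp: flow_mat_def Lam_mat_def split: if_splits)
    then show ?thesis using 4 by (auto simp: flow_vert_def flow_edges_def)
  qed
qed

lemma flow_of_flow_mat_transversal:
  assumes graph: "B \<subseteq> {0..<n} \<times> {0..<n}" "DL \<subseteq> {0..<n} \<times> {0..<n}" "DR \<subseteq> {0..<n} \<times> {0..<n}"
    and S: "S \<subseteq> {0..<n}" and T: "T \<subseteq> {0..<n}"
    and \<sigma>: "bij_betw \<sigma> ({0..<n + n} - (+) n ` T) ({0..<n + n} - S)"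
    and nonzero: "\<And>a. a \<in> {0..<n + n} - (+) n ` T \<Longrightarrow> flow_mat n B DL DR lam om $$ (a, \<sigma> a) \<noteq> 0"
  obtains f sig tau where "is_flow (flow_verts n) (flow_edges n B DL DR) (L ` S) (P ` T) f sig tau"
    and "flow_value (L ` S) sig = card S"
proof -
  let ?v = "flow_vert n" and ?A = "{0..<n + n}" and ?T = "(+) n ` T"
  have v: "bij_betw ?v ?A (flow_verts n)" by (rule bij_betw_flow_vert)
  have "bij_betw ?v S (L ` S)"
    using S by (intro bij_betw_subset[OF v] image_cong) auto
  then have v_S: "bij_betw ?v (?A - S) (flow_verts n - L ` S)"
    by (rule bij_betw_DiffI[OF v]) (use S in \<open>auto simp: flow_verts_def\<close>)
  have "bij_betw ?v ?T (P ` T)"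
    using T by (intro bij_betw_subset[OF v]) (auto simp: image_image)
  then have v_T: "bij_betw ?v (?A - ?T) (flow_verts n - P ` T)"
    by (rule bij_betw_DiffI[OF v]) (use T in \<open>auto simp: flow_verts_def\<close>)
  define \<tau> where "\<tau> = ?v \<circ> (\<sigma> \<circ> inv_into (?A - ?T) ?v)"
  have "bij_betw \<tau> (flow_verts n - P ` T) (flow_verts n - L ` S)"
    unfolding \<tau>_def by (rule bij_betw_trans[OF bij_betw_trans[OF bij_betw_inv_into[OF v_T] \<sigma>] v_S])
  moreover have "(u, \<tau> u) \<in> flow_edges n B DL DR"
    if u: "u \<in> flow_verts n - P ` T" and "\<tau> u \<noteq> u" for u
  proof -
    define a where "a = inv_into (?A - ?T) ?v u"
    have a: "a \<in> ?A - ?T" "?v a = u"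
      using bij_betwE[OF bij_betw_inv_into[OF v_T]] bij_betw_inv_into_right[OF v_T] u
      unfolding a_def by blast+
    have "\<sigma> a \<in> ?A" using bij_betwE[OF \<sigma>] a(1) by blast
    moreover have "a \<noteq> \<sigma> a" using \<open>\<tau> u \<noteq> u\<close> a unfolding \<tau>_def a_def by auto
    ultimately have "(?v a, ?v (\<sigma> a)) \<in> flow_edges n B DL DR"
      using a(1) nonzero by (intro flow_edge_if_flow_mat_nonzero) auto
    then show ?thesis using a unfolding \<tau>_def a_def by simp
  qed
  moreover have "finite (flow_edges n B DL DR)"
    using flow_edges_subset[OF graph] by (rule finite_subset) (simp add: flow_verts_def)
  moreover have "L ` S \<subseteq> flow_verts n" "P ` T \<subseteq> flow_verts n"
    using S T by (auto simp: flow_verts_def)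
  ultimately obtain f sig tau
    where "is_flow (flow_verts n) (flow_edges n B DL DR) (L ` S) (P ` T) f sig tau"
    and "flow_value (L ` S) sig = card (L ` S)"
    using flow_of_bij_betw[of "flow_edges n B DL DR" "L ` S" "flow_verts n" "P ` T" \<tau>] by blast
  moreover have "card (L ` S) = card S" by (rule card_image) (simp add: inj_on_def)
  ultimately show ?thesis using that by simp
qed

lemma flow_of_minor_nonzero:
  fixes M\<^sub>L M\<^sub>R :: "real mat"
  assumes graph: "B \<subseteq> {0..<n} \<times> {0..<n}" "DL \<subseteq> {0..<n} \<times> {0..<n}" "DR \<subseteq> {0..<n} \<times> {0..<n}"
    and S: "S \<subseteq> {0..<n}" and T: "T \<subseteq> {0..<n}" and card: "card S = card T"
    and M\<^sub>L: "M\<^sub>L \<in> carrier_mat n n" and M\<^sub>R: "M\<^sub>R \<in> carrier_mat n n"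
    and left: "M\<^sub>L * (1\<^sub>m n - Lam_mat n DL lam) = 1\<^sub>m n"
    and right: "(1\<^sub>m n - Lam_mat n DR lam) * M\<^sub>R = 1\<^sub>m n"
    and minor: "det (submatrix (transpose_mat M\<^sub>L * Om_mat n B om * M\<^sub>R) S T) \<noteq> 0"
  obtains f sig tau where "is_flow (flow_verts n) (flow_edges n B DL DR) (L ` S) (P ` T) f sig tau"
    and "flow_value (L ` S) sig = card S"
proof -
  let ?N = "flow_mat n B DL DR lam om" and ?A = "{0..<n + n}" and ?T = "(+) n ` T"
  let ?\<Gamma> = "transpose_mat M\<^sub>L * Om_mat n B om * M\<^sub>R"
  let ?X = "four_block_mat (transpose_mat M\<^sub>L) ?\<Gamma> (0\<^sub>m n n) M\<^sub>R"
  have X: "?X \<in> carrier_mat (n + n) (n + n)" using M\<^sub>L M\<^sub>R by simp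
  have S': "S \<subseteq> ?A" and T': "?T \<subseteq> ?A" using S T by auto
  have card': "card S = card ?T" using card by (simp add: card_image)
  have card_compl: "card (?A - ?T) = card (?A - S)"
    using S' T' card' by (simp add: card_Diff_subset finite_subset)
  have "det (submatrix ?X S ?T) \<noteq> 0"
    using minor M\<^sub>L M\<^sub>R S T card by (subst det_submatrix_four_block_mat_upper_right) auto
  then have "det (submatrix ?N (?A - ?T) (?A - S)) \<noteq> 0"
    using flow_mat_inverse[OF M\<^sub>L M\<^sub>R left right]
    by (intro det_submatrix_complement_nonzero[OF flow_mat_carrier X _ S' T' card'])
  then obtain \<sigma> where "bij_betw \<sigma> (?A - ?T) (?A - S)"
    and "\<And>a. a \<in> ?A - ?T \<Longrightarrow> ?N $$ (a, \<sigma> a) \<noteq> 0"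
    using det_submatrix_nonzero_imp_transversal[OF flow_mat_carrier Diff_subset Diff_subset]
      card_compl by blast
  then show ?thesis using that by (rule flow_of_flow_mat_transversal[OF graph S T])
qed

theorem lemma3p7:
  fixes n k :: nat and D B DL DR :: "(nat \<times> nat) set" and S T :: "nat set"
  assumes "D \<subseteq> {0..<n} \<times> {0..<n}" and "\<forall>u. (u, u) \<notin> D"
    and "B \<subseteq> {0..<n} \<times> {0..<n}" and "\<forall>u. (u, u) \<notin> B" and "sym B"
    and "DL \<subseteq> D" and "DR \<subseteq> D"
    and "S \<subseteq> {0..<n}" and "T \<subseteq> {0..<n}" and "card S = k" and "card T = k"
    and "max_flow (flow_verts n) (flow_edges n B DL DR) (L ` S) (P ` T) < real k"
  shows "\<forall>(lam :: nat \<Rightarrow> nat \<Rightarrow> real) (om :: nat \<Rightarrow> nat \<Rightarrow> real) ML MR.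
           (\<forall>u v. om u v = om v u) \<longrightarrow>
           ML \<in> carrier_mat n n \<longrightarrow> MR \<in> carrier_mat n n \<longrightarrow>
           inverts_mat (1\<^sub>m n - Lam_mat n DL lam) ML \<longrightarrow> inverts_mat ML (1\<^sub>m n - Lam_mat n DL lam) \<longrightarrow>
           inverts_mat (1\<^sub>m n - Lam_mat n DR lam) MR \<longrightarrow> inverts_mat MR (1\<^sub>m n - Lam_mat n DR lam) \<longrightarrow>
           det (submatrix (transpose_mat ML * Om_mat n B om * MR) S T) = 0"
proof (intro allI impI)
  fix lam om :: "nat \<Rightarrow> nat \<Rightarrow> real" and M\<^sub>L M\<^sub>R :: "real mat"
  assume M\<^sub>L: "M\<^sub>L \<in> carrier_mat n n" and M\<^sub>R: "M\<^sub>R \<in> carrier_mat n n"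
    and left: "inverts_mat M\<^sub>L (1\<^sub>m n - Lam_mat n DL lam)"
    and right: "inverts_mat (1\<^sub>m n - Lam_mat n DR lam) M\<^sub>R"
  have graph: "B \<subseteq> {0..<n} \<times> {0..<n}" "DL \<subseteq> {0..<n} \<times> {0..<n}" "DR \<subseteq> {0..<n} \<times> {0..<n}"
    using assms(1,3,6,7) by auto
  have left': "M\<^sub>L * (1\<^sub>m n - Lam_mat n DL lam) = 1\<^sub>m n"
    and right': "(1\<^sub>m n - Lam_mat n DR lam) * M\<^sub>R = 1\<^sub>m n"
    using left right M\<^sub>L by (simp_all add: inverts_mat_def Lam_mat_def)
  show "det (submatrix (transpose_mat M\<^sub>L * Om_mat n B om * M\<^sub>R) S T) = 0"
  proof (rule ccontr)
    assume "det (submatrix (transpose_mat M\<^sub>L * Om_mat n B om * M\<^sub>R) S T) \<noteq> 0"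
    then obtain f sig tau
      where "is_flow (flow_verts n) (flow_edges n B DL DR) (L ` S) (P ` T) f sig tau"
        and "flow_value (L ` S) sig = k"
      using flow_of_minor_nonzero[OF graph assms(8,9) _ M\<^sub>L M\<^sub>R left' right'] assms(10,11) by metis
    moreover have "L ` S \<subseteq> flow_verts n" using assms(8) by (auto simp: flow_verts_def)
    ultimately have "real k \<le> max_flow (flow_verts n) (flow_edges n B DL DR) (L ` S) (P ` T)"
      using flow_value_le_max_flow by metis
    with assms(12) show False by simp
  qed
qed

end
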